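(* Let $(Y_0,Y_1,U,Z)$ be random variables, let $D=\mathbb{1}[U\le \nu(Z)]$ for some unknown function $\nu$, and $Y=(1-D)Y_0+DY_1$, where $Z$ is discrete with support $\{z_0,z_1,\dots,z_K\}$. Assume: (1) $Z$ is independent of $U$; (2) $E[Y_d\mid Z,U]=E[Y_d\mid U]$ and $E|Y_d|<\infty$ for $d\in\{0,1\}$; (3) $U$ is continuously distributed; (4) $0<P(D=1\mid Z=z)<1$ for all $z\in\{z_0,\dots,z_K\}$; (5) for known continuous functions $h_1,\dots,h_M$ on $(0,1)$ and $d\in\{0,1\}$, $E[Y_d\mid F_U(U)=u]=\mu_d+\sum_{m=1}^M\rho_{dm}h_m(u)$ for $u\in(0,1)$, where $F_U$ is the distribution function of $U$; (6) the families $\{\lambda_{1m}\}_{m=0}^M$ and $\{\lambda_{0m}\}_{m=0}^M$ are each unisolvent on $(0,1)$; (7) $\bar K:=|\{P(D=1\mid Z=z):z=z_0,\dots,z_K\}|\ge M+1$. Then $\theta=(\theta_1',\theta_0')'$ with $\theta_d=(\mu_d,\rho_{d1},\dots,\rho_{dM})'$ is point identified from the distribution of $(Y,D,Z)$. More precisely, writing $p(z)=P(D=1\mid Z=z)$, for each $d\in\{0,1\}$ one has $\beta_d=A_d\theta_d$, the matrix $A_d$ has full column rank $M+1$, and hence $\theta_d$ is the unique solution of this linear system.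
   Context: Notation: $\lambda_{10}=\lambda_{00}\equiv 1$ and for $m=1,\dots,M$ and $p\in(0,1)$, $\lambda_{1m}(p)=\frac1p\int_0^p h_m(u)\,du$ and $\lambda_{0m}(p)=\frac{1}{1-p}\int_p^1 h_m(u)\,du$. A set of $n$ functions $f_1,\dots,f_n$ is unisolvent on a domain $\Omega$ if for every choice of $n$ distinct points $x_1,\dots,x_n\in\Omega$ the $n\times n$ matrix with entries $f_i(x_j)$ has nonzero determinant. $A_d$ is the $(K+1)\times(M+1)$ matrix whose $(\ell,m)$ entry ($\ell=0,\dots,K$, $m=0,\dots,M$) is $\lambda_{dm}(p(z_\ell))$, and $\beta_d=(E[Y\mid D=d,Z=z_0],\dots,E[Y\mid D=d,Z=z_K])'$. *)

theory Defs
  imports "HOL-Probability.Probability" "Jordan_Normal_Form.DL_Rank"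
begin

text \<open>lambda_{dm}(p) from the paper; by convention lambda_{d0} = 1.
  Here d is 1 or 0 (any d different from 1 is treated as 0).\<close>
definition lam :: "(nat \<Rightarrow> real \<Rightarrow> real) \<Rightarrow> nat \<Rightarrow> nat \<Rightarrow> real \<Rightarrow> real" where
  "lam h d m p =
     (if m = 0 then 1
      else if d = 1 then (1 / p) * (LBINT u=0..p. h m u)
      else (1 / (1 - p)) * (LBINT u=p..1. h m u))"

definition unisolvent :: "nat \<Rightarrow> (nat \<Rightarrow> real \<Rightarrow> real) \<Rightarrow> real set \<Rightarrow> bool" where
  "unisolvent n f S \<longleftrightarrow>
     (\<forall>x :: nat \<Rightarrow> real. (\<forall>j<n. x j \<in> S) \<and> inj_on x {..<n} \<longrightarrow>
        det (mat n n (\<lambda>(i, j). f i (x j))) \<noteq> 0)"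

definition cond_expect_event :: "'a measure \<Rightarrow> ('a \<Rightarrow> real) \<Rightarrow> ('a \<Rightarrow> bool) \<Rightarrow> real" where
  "cond_expect_event P X Q =
     (\<integral>\<omega>. X \<omega> * indicator {\<omega> \<in> space P. Q \<omega>} \<omega> \<partial>P) / measure P {\<omega> \<in> space P. Q \<omega>}"

end

(* On {Z = z} the treatment D = d is the event that U lies below (d = 1) or above (d = 0) the
   threshold \<nu> z. Independence of U and Z together with mean independence factor P(Z = z) out of
   E[Y; D = d, Z = z], leaving E[Y_d; U on one side of \<nu> z]. Since U has no atoms, V = F_U(U) is
   uniform on [0,1] and {U \<le> c} = {V \<le> F_U c} almost surely, so by the MTE specification this
   expectation is the integral of \<mu>_d + \<Sum> \<rho>_dm h_m over [0, p(z)] resp. [p(z), 1]. Dividing by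
   P(D = d, Z = z) gives the row (\<lambda>_dm(p(z)))_m times \<theta>_d. Among the rows there are M + 1 with
   distinct propensities p(z); they form a collocation matrix of the unisolvent family, which is
   nonsingular, so A_d has full column rank and \<theta>_d is the unique solution. *)

theory Submission
  imports Defs "Jordan_Normal_Form.DL_Rank_Submatrix"
begin

lemma mono_continuous_sublevel_atMost:
  fixes F :: "real \<Rightarrow> real"
  assumes mono: "mono F" and cont: "continuous_on UNIV F"
    and bot: "(F \<longlongrightarrow> 0) at_bot" and top: "(F \<longlongrightarrow> 1) at_top"
    and t: "0 < t" "t < 1"
  obtains \<beta> where "F \<beta> = t" "\<And>x. F x \<le> t \<longleftrightarrow> x \<le> \<beta>"
proof -
  obtain a where a: "F a < t"
    using eventually_happens'[OF _ order_tendstoD(2)[OF bot t(1)]] by auto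
  obtain b where b: "t < F b"
    using eventually_happens'[OF _ order_tendstoD(1)[OF top t(2)]] by auto
  have below_b: "x \<le> b" if "F x \<le> t" for x
  proof (rule ccontr)
    assume "\<not> x \<le> b"
    then have "F b \<le> F x" using mono by (simp add: monoD)
    with b that show False by simp
  qed
  have "a \<le> b" using below_b a by simp
  then obtain x0 where x0: "F x0 = t"
    using IVT'[of F a t b] a b continuous_on_subset[OF cont] by fastforce
  define S where "S = {x. F x \<le> t}"
  have "closed S"
    unfolding S_def using cont by (intro closed_Collect_le) auto
  moreover have "bdd_above S"
    unfolding S_def using below_b by (intro bdd_aboveI[of _ b]) simp
  moreover have "x0 \<in> S" using x0 by (simp add: S_def)
  ultimately have "Sup S \<in> S" and le_Sup: "\<And>x. x \<in> S \<Longrightarrow> x \<le> Sup S"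
    using closed_contains_Sup cSup_upper by blast+
  have "F (Sup S) = t"
    using \<open>Sup S \<in> S\<close> monoD[OF mono le_Sup[OF \<open>x0 \<in> S\<close>]] x0 by (simp add: S_def)
  moreover have "F x \<le> t \<longleftrightarrow> x \<le> Sup S" for x
    using le_Sup[of x] monoD[OF mono, of x "Sup S"] \<open>F (Sup S) = t\<close> by (auto simp: S_def)
  ultimately show ?thesis using that by blast
qed

lemma integrable_bounded_mult:
  fixes f g :: "'a \<Rightarrow> real"
  assumes "integrable M f" "g \<in> borel_measurable M" "\<And>x. \<bar>g x\<bar> \<le> 1"
  shows "integrable M (\<lambda>x. g x * f x)"
proof (rule Bochner_Integration.integrable_bound[OF assms(1)])
  show "(\<lambda>x. g x * f x) \<in> borel_measurable M"
    using assms(1,2) by measurable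
  show "AE x in M. norm (g x * f x) \<le> norm (f x)"
    using assms(3) by (auto simp: abs_mult intro!: mult_left_le_one_le)
qed

lemma sigma_sets_vimage_algebra_subset:
  assumes "X \<in> measurable (vimage_algebra \<Omega> U M) N"
  shows "sigma_sets \<Omega> {X -` A \<inter> \<Omega> | A. A \<in> sets N} \<subseteq> sigma_sets \<Omega> {U -` A \<inter> \<Omega> | A. A \<in> sets M}"
proof -
  have "sigma_sets (space (vimage_algebra \<Omega> U M)) {X -` A \<inter> \<Omega> | A. A \<in> sets N}
      \<subseteq> sets (vimage_algebra \<Omega> U M)"
    using measurable_sets[OF assms] by (intro sets.sigma_sets_subset) auto
  then show ?thesis by (simp add: sets_vimage_algebra)
qed

lemma measurable_vimage_algebra_comp:
  "U \<in> X \<rightarrow> space N \<Longrightarrow> f \<in> measurable N L \<Longrightarrow> (\<lambda>x. f (U x)) \<in> measurable (vimage_algebra X U N) L"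
  using measurable_comp[OF measurable_vimage_algebra1] by (simp add: comp_def)

context prob_space
begin

lemma subalgebra_vimage_algebra:
  "f \<in> measurable M N \<Longrightarrow> subalgebra M (vimage_algebra (space M) f N)"
  unfolding subalgebra_def using sets_image_in_sets[of M "space M" f N] by auto

lemma sigma_finite_subalgebra_vimage_algebra:
  "f \<in> measurable M N \<Longrightarrow> sigma_finite_subalgebra M (vimage_algebra (space M) f N)"
  by (intro finite_measure_subalgebra_is_sigma_finite finite_measure_subalgebra.intro
      finite_measure_subalgebra_axioms.intro finite_measure_axioms subalgebra_vimage_algebra)

lemma indep_var_vimage_algebra:
  assumes "indep_var S U T Z"
    and X: "X \<in> measurable (vimage_algebra (space M) U S) S'"
    and Y: "Y \<in> measurable (vimage_algebra (space M) Z T) T'"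
  shows "indep_var S' X T' Y"
proof -
  have U: "random_variable S U" and Z: "random_variable T Z"
    and indep: "indep_set (sigma_sets (space M) {U -` A \<inter> space M | A. A \<in> sets S})
      (sigma_sets (space M) {Z -` A \<inter> space M | A. A \<in> sets T})"
    using assms(1) unfolding indep_var_eq by auto
  have "random_variable S' X" "random_variable T' Y"
    using measurable_from_subalg[OF subalgebra_vimage_algebra[OF U] X]
      measurable_from_subalg[OF subalgebra_vimage_algebra[OF Z] Y] .
  moreover have "indep_set (sigma_sets (space M) {X -` A \<inter> space M | A. A \<in> sets S'})
      (sigma_sets (space M) {Y -` A \<inter> space M | A. A \<in> sets T'})"
    using indep unfolding indep_set_def
    by (rule indep_sets_mono_sets)
      (use sigma_sets_vimage_algebra_subset[OF X] sigma_sets_vimage_algebra_subset[OF Y]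
        in \<open>auto split: bool.split\<close>)
  ultimately show ?thesis unfolding indep_var_eq by simp
qed

lemma integral_indicator_mean_independent:
  fixes U Z Y :: "'a \<Rightarrow> real"
  assumes indep: "indep_var borel U borel Z"
    and Y: "integrable M Y"
    and mean_indep: "AE \<omega> in M.
      real_cond_exp M (vimage_algebra (space M) (\<lambda>\<omega>. (Z \<omega>, U \<omega>)) borel) Y \<omega>
        = real_cond_exp M (vimage_algebra (space M) U borel) Y \<omega>"
    and [measurable]: "J \<in> sets borel" "B \<in> sets borel"
  shows "(\<integral>\<omega>. Y \<omega> * indicator {\<omega> \<in> space M. U \<omega> \<in> J \<and> Z \<omega> \<in> B} \<omega> \<partial>M)
       = (\<integral>\<omega>. indicator J (U \<omega>) * Y \<omega> \<partial>M) * prob {\<omega> \<in> space M. Z \<omega> \<in> B}"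
proof -
  have [measurable]: "U \<in> borel_measurable M" "Z \<in> borel_measurable M"
    using indep unfolding indep_var_eq by auto
  have [measurable]: "Y \<in> borel_measurable M" using Y by (rule borel_measurable_integrable)
  define G\<^sub>Z\<^sub>U where "G\<^sub>Z\<^sub>U = vimage_algebra (space M) (\<lambda>\<omega>. (Z \<omega>, U \<omega>)) (borel :: (real \<times> real) measure)"
  define G\<^sub>U where "G\<^sub>U = vimage_algebra (space M) U (borel :: real measure)"
  interpret ZU: sigma_finite_subalgebra M G\<^sub>Z\<^sub>U
    unfolding G\<^sub>Z\<^sub>U_def by (rule sigma_finite_subalgebra_vimage_algebra) measurable
  interpret U: sigma_finite_subalgebra M G\<^sub>U
    unfolding G\<^sub>U_def by (rule sigma_finite_subalgebra_vimage_algebra) measurable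
  define W where "W = real_cond_exp M G\<^sub>U Y"
  have ind_U: "(\<lambda>\<omega>. indicator J (U \<omega>) :: real) \<in> borel_measurable G\<^sub>U"
    unfolding G\<^sub>U_def by (rule measurable_vimage_algebra_comp) auto
  have ind_U_Y: "integrable M (\<lambda>\<omega>. indicator J (U \<omega>) * Y \<omega>)"
    by (rule integrable_bounded_mult[OF Y]) (auto simp: indicator_def)
  define ind_UZ where "ind_UZ = (\<lambda>\<omega>. indicator J (U \<omega>) * indicator B (Z \<omega>) :: real)"
  have ind_UZ: "ind_UZ \<in> borel_measurable G\<^sub>Z\<^sub>U"
  proof -
    have "(\<lambda>x :: real \<times> real. indicator J (snd x) * indicator B (fst x) :: real) \<in> borel_measurable borel"
      unfolding borel_prod[symmetric] by measurable
    from measurable_vimage_algebra_comp[OF _ this, of "\<lambda>\<omega>. (Z \<omega>, U \<omega>)" "space M"]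
    show ?thesis unfolding G\<^sub>Z\<^sub>U_def ind_UZ_def by simp
  qed
  have "(\<integral>\<omega>. Y \<omega> * indicator {\<omega> \<in> space M. U \<omega> \<in> J \<and> Z \<omega> \<in> B} \<omega> \<partial>M) = (\<integral>\<omega>. ind_UZ \<omega> * Y \<omega> \<partial>M)"
    by (rule Bochner_Integration.integral_cong) (auto simp: ind_UZ_def indicator_def)
  also have "\<dots> = (\<integral>\<omega>. ind_UZ \<omega> * real_cond_exp M G\<^sub>Z\<^sub>U Y \<omega> \<partial>M)"
    using ind_UZ measurable_from_subalg[OF ZU.subalg ind_UZ]
    by (intro ZU.real_cond_exp_intg(2)[symmetric] integrable_bounded_mult[OF Y])
      (auto simp: ind_UZ_def indicator_def)
  also have "\<dots> = (\<integral>\<omega>. ind_UZ \<omega> * W \<omega> \<partial>M)"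
    using mean_indep measurable_from_subalg[OF ZU.subalg ind_UZ] borel_measurable_cond_exp2
    unfolding G\<^sub>Z\<^sub>U_def G\<^sub>U_def W_def by (intro integral_cong_AE) (measurable, auto)
  also have "\<dots> = (\<integral>\<omega>. (indicator J (U \<omega>) * W \<omega>) * indicator B (Z \<omega>) \<partial>M)"
    by (simp add: ind_UZ_def ac_simps)
  also have "\<dots> = (\<integral>\<omega>. indicator J (U \<omega>) * W \<omega> \<partial>M) * (\<integral>\<omega>. indicator B (Z \<omega>) \<partial>M)"
  \<comment> \<open>the conditional expectation given U is a function of U, hence independent of Z\<close>
  proof (rule indep_var_lebesgue_integral)
    have "(\<lambda>\<omega>. indicator J (U \<omega>) * W \<omega>) \<in> borel_measurable G\<^sub>U"
      using ind_U borel_measurable_cond_exp[of M G\<^sub>U Y] unfolding W_def by (rule borel_measurable_times)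
    then show "indep_var borel (\<lambda>\<omega>. indicator J (U \<omega>) * W \<omega>) borel (\<lambda>\<omega>. indicator B (Z \<omega>))"
      unfolding G\<^sub>U_def by (rule indep_var_vimage_algebra[OF indep]) (rule measurable_vimage_algebra_comp; simp)
    show "integrable M (\<lambda>\<omega>. indicator J (U \<omega>) * W \<omega>)"
      unfolding W_def using ind_U ind_U_Y by (intro U.real_cond_exp_intg(1)) auto
    show "integrable M (\<lambda>\<omega>. indicator B (Z \<omega>) :: real)"
      by (rule integrable_const_bound[where B=1]) (auto simp: indicator_def)
  qed
  also have "(\<integral>\<omega>. indicator J (U \<omega>) * W \<omega> \<partial>M) = (\<integral>\<omega>. indicator J (U \<omega>) * Y \<omega> \<partial>M)"
    unfolding W_def using ind_U ind_U_Y by (intro U.real_cond_exp_intg(2)) auto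
  also have "(\<integral>\<omega>. indicator B (Z \<omega>) \<partial>M) = prob {\<omega> \<in> space M. Z \<omega> \<in> B}"
  proof -
    have "(\<integral>\<omega>. indicator B (Z \<omega>) \<partial>M) = (\<integral>\<omega>. (indicator {\<omega> \<in> space M. Z \<omega> \<in> B} \<omega> :: real) \<partial>M)"
      by (rule Bochner_Integration.integral_cong) (auto simp: indicator_def)
    moreover have "{\<omega> \<in> space M. Z \<omega> \<in> B} \<in> sets M" by measurable
    ultimately show ?thesis by simp
  qed
  finally show ?thesis .
qed

lemma set_integral_uniform_cond_exp:
  fixes V Y :: "'a \<Rightarrow> real" and g :: "real \<Rightarrow> real"
  assumes V: "distributed M lborel V (\<lambda>x. ennreal (indicator {0..1} x))"
    and Y: "integrable M Y"
    and g: "set_borel_measurable lborel {0<..<1} g"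
    and cond_exp: "AE \<omega> in M. real_cond_exp M (vimage_algebra (space M) V borel) Y \<omega> = g (V \<omega>)"
    and [measurable]: "I \<in> sets borel"
  shows "(\<integral>\<omega>. indicator I (V \<omega>) * Y \<omega> \<partial>M) = (\<integral>x \<in> {0<..<1} \<inter> I. g x \<partial>lborel)"
proof -
  have [measurable]: "V \<in> borel_measurable M"
    using distributed_measurable[OF V] by simp
  have [measurable]: "Y \<in> borel_measurable M" using Y by (rule borel_measurable_integrable)
  define G\<^sub>V where "G\<^sub>V = vimage_algebra (space M) V (borel :: real measure)"
  interpret V: sigma_finite_subalgebra M G\<^sub>V
    unfolding G\<^sub>V_def by (rule sigma_finite_subalgebra_vimage_algebra) measurable
  define G where "G = (\<lambda>x. indicator I x * (indicator {0<..<1} x *\<^sub>R g x))"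
  have [measurable]: "(\<lambda>x. indicator {0<..<1} x *\<^sub>R g x) \<in> borel_measurable borel"
    using g unfolding set_borel_measurable_def by simp
  have [measurable]: "G \<in> borel_measurable borel"
    unfolding G_def by measurable
  have "AE \<omega> in M. V \<omega> \<in> {0<..<1}"
  proof (rule AE_distrD[OF distributed_measurable[OF V]])
    have "AE x in lborel. 0 < ennreal (indicator {0..1} x) \<longrightarrow> x \<in> {0<..<1::real}"
      using AE_lborel_singleton[of "0::real"] AE_lborel_singleton[of "1::real"]
      by eventually_elim (auto simp: indicator_def)
    then show "AE x in distr M lborel V. x \<in> {0<..<1}"
      unfolding distributed_distr_eq_density[OF V]
      by (subst AE_density) (use distributed_borel_measurable[OF V] in auto)
  qed
  have ind_V: "(\<lambda>\<omega>. indicator I (V \<omega>) :: real) \<in> borel_measurable G\<^sub>V"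
    unfolding G\<^sub>V_def by (rule measurable_vimage_algebra_comp) auto
  have "(\<integral>\<omega>. indicator I (V \<omega>) * Y \<omega> \<partial>M) = (\<integral>\<omega>. indicator I (V \<omega>) * real_cond_exp M G\<^sub>V Y \<omega> \<partial>M)"
    using ind_V by (intro V.real_cond_exp_intg(2)[symmetric] integrable_bounded_mult[OF Y])
      (auto simp: indicator_def)
  also have "\<dots> = (\<integral>\<omega>. G (V \<omega>) \<partial>M)"
    using cond_exp \<open>AE \<omega> in M. V \<omega> \<in> {0<..<1}\<close> borel_measurable_cond_exp2
    unfolding G\<^sub>V_def by (intro integral_cong_AE) (measurable, auto simp: G_def)
  also have "\<dots> = (\<integral>x. indicator {0..1} x * G x \<partial>lborel)"
    by (rule distributed_integral[OF V, symmetric]) auto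
  also have "\<dots> = (\<integral>x \<in> {0<..<1} \<inter> I. g x \<partial>lborel)"
    unfolding set_lebesgue_integral_def
    by (rule Bochner_Integration.integral_cong) (auto simp: G_def indicator_def)
  finally show ?thesis .
qed

end

text \<open>D = d exactly when U lies in selection_region d (\<nu> Z); as in lam, every d \<noteq> 1 is treated as 0.\<close>

definition selection_region :: "nat \<Rightarrow> real \<Rightarrow> real set" where
  "selection_region d c = (if d = 1 then {..c} else {c<..})"

lemma sets_selection_region [measurable]: "selection_region d c \<in> sets borel"
  by (simp add: selection_region_def)

lemma measure_selection_region:
  assumes "0 < q" "q < 1"
  shows "measure lborel ({0<..<1} \<inter> selection_region d q) = (if d = 1 then q else 1 - q)"
proof -
  have "{0<..<1} \<inter> {..q} = {0<..q}" "{0<..<1} \<inter> {q<..} = {q<..<1}"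
    using assms by auto
  then show ?thesis using assms by (simp add: selection_region_def)
qed

lemma lam_eq_set_integral:
  assumes q: "0 < q" "q < 1" and "m \<noteq> 0"
    and h: "set_borel_measurable lborel {0<..<1} (h m)"
  shows "lam h d m q = (\<integral>x \<in> {0<..<1} \<inter> selection_region d q. h m x \<partial>lborel)
                       / measure lborel ({0<..<1} \<inter> selection_region d q)"
proof (cases "d = 1")
  case True
  have "(\<integral>x \<in> {0<..<q}. h m x \<partial>lborel) = (\<integral>x \<in> {0<..q}. h m x \<partial>lborel)"
    using q AE_lborel_singleton[of q]
    by (intro set_integral_cong_set set_borel_measurable_subset[OF h]) (auto elim: eventually_mono)
  moreover have "{0<..<1} \<inter> {..q} = {0<..q}" "einterval 0 q = {0<..<q}"
    using q by (auto simp: einterval_def)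
  ultimately show ?thesis
    using True q \<open>m \<noteq> 0\<close> by (simp add: lam_def selection_region_def interval_lebesgue_integral_def)
next
  case False
  have "{0<..<1} \<inter> {q<..} = {q<..<1}" "einterval q 1 = {q<..<1}"
    using q by (auto simp: einterval_def)
  then show ?thesis
    using False q \<open>m \<noteq> 0\<close> by (simp add: lam_def selection_region_def interval_lebesgue_integral_def)
qed

lemma set_integrable_mte:
  fixes h :: "nat \<Rightarrow> real \<Rightarrow> real"
  assumes "\<And>m. m \<in> {1..M} \<Longrightarrow> set_integrable lborel {0<..<1} (h m)"
  shows "set_integrable lborel {0<..<1} (\<lambda>x. \<mu> + (\<Sum>m = 1..M. \<rho> m * h m x :: real))"
proof -
  have "set_integrable lborel {0<..<1} (\<lambda>x::real. \<mu>)"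
    unfolding set_integrable_def by (intro integrable_scaleR_left integrable_real_indicator) simp_all
  moreover have "set_integrable lborel {0<..<1} (\<lambda>x. \<rho> m * h m x)" if "m \<in> {1..M}" for m
    using assms[OF that] by (rule set_integrable_mult_right)
  then have "set_integrable lborel {0<..<1} (\<lambda>x. \<Sum>m = 1..M. \<rho> m * h m x)"
    unfolding set_integrable_def scaleR_sum_right by (rule Bochner_Integration.integrable_sum)
  ultimately show ?thesis by (rule set_integral_add(1))
qed

lemma set_integral_mte:
  fixes h :: "nat \<Rightarrow> real \<Rightarrow> real"
  assumes h_int: "\<And>m. m \<in> {1..M} \<Longrightarrow> set_integrable lborel {0<..<1} (h m)"
    and J: "J \<in> sets borel" "J \<subseteq> {0<..<1}"
  shows "(\<integral>x \<in> J. \<mu> + (\<Sum>m = 1..M. \<rho> m * h m x) \<partial>lborel)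
       = \<mu> * measure lborel J + (\<Sum>m = 1..M. \<rho> m * (\<integral>x \<in> J. h m x \<partial>lborel))"
proof -
  have "emeasure lborel J \<le> 1"
    using emeasure_mono[of J "{0<..<1::real}" lborel] J by simp
  then have fin: "emeasure lborel J < \<infinity>"
    unfolding infinity_ennreal_def using ennreal_one_less_top by (rule le_less_trans)
  have h_int_J: "set_integrable lborel J (h m)" if "m \<in> {1..M}" for m
    using set_integrable_subset[OF h_int[OF that] _ J(2)] J(1) by simp
  have "(\<integral>x \<in> J. \<mu> + (\<Sum>m = 1..M. \<rho> m * h m x) \<partial>lborel)
      = (\<integral>x. \<mu> * indicator J x + (\<Sum>m = 1..M. \<rho> m * (indicator J x *\<^sub>R h m x)) \<partial>lborel)"
    unfolding set_lebesgue_integral_def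
    by (rule Bochner_Integration.integral_cong) (auto simp: sum_distrib_left algebra_simps)
  also have "\<dots> = \<mu> * measure lborel J + (\<Sum>m = 1..M. \<rho> m * (\<integral>x \<in> J. h m x \<partial>lborel))"
    using h_int_J fin J unfolding set_lebesgue_integral_def set_integrable_def
    by (subst Bochner_Integration.integral_add Bochner_Integration.integral_sum; auto)+
  finally show ?thesis .
qed

lemma set_integral_mte_eq_lam_sum:
  fixes h :: "nat \<Rightarrow> real \<Rightarrow> real" and d :: nat
  assumes q: "0 < q" "q < 1"
    and h_int: "\<And>m. m \<in> {1..M} \<Longrightarrow> set_integrable lborel {0<..<1} (h m)"
  defines "J \<equiv> {0<..<1} \<inter> selection_region d q"
  shows "(\<integral>x \<in> J. \<mu> + (\<Sum>m = 1..M. \<rho> m * h m x) \<partial>lborel) / measure lborel J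
       = (\<Sum>j<M + 1. lam h d j q * (if j = 0 then \<mu> else \<rho> j))"
proof -
  have J: "J \<in> sets borel" "J \<subseteq> {0<..<1}" unfolding J_def selection_region_def by auto
  have "measure lborel J > 0" using measure_selection_region[OF q, of d] q unfolding J_def by simp
  have lam: "lam h d m q = (\<integral>x \<in> J. h m x \<partial>lborel) / measure lborel J" if "m \<in> {1..M}" for m
  proof -
    have "set_borel_measurable lborel {0<..<1} (h m)"
      using h_int[OF that] unfolding set_integrable_def set_borel_measurable_def
      by (rule borel_measurable_integrable)
    then show ?thesis unfolding J_def using that by (intro lam_eq_set_integral[OF q]) auto
  qed
  have "(\<integral>x \<in> J. \<mu> + (\<Sum>m = 1..M. \<rho> m * h m x) \<partial>lborel) / measure lborel J
      = \<mu> + (\<Sum>m = 1..M. \<rho> m * lam h d m q)"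
    using set_integral_mte[OF h_int J, where \<mu> = \<mu> and \<rho> = \<rho>] lam \<open>measure lborel J > 0\<close>
    by (simp add: add_divide_distrib sum_divide_distrib)
  also have "\<dots> = (\<Sum>j<M + 1. lam h d j q * (if j = 0 then \<mu> else \<rho> j))"
  proof -
    have "{..<M + 1} = insert 0 {1..M}" by auto
    then show ?thesis by (simp add: lam_def mult.commute)
  qed
  finally show ?thesis .
qed

locale continuous_real_rv = prob_space P for P :: "'a measure" +
  fixes U :: "'a \<Rightarrow> real"
  assumes measurable_U [measurable]: "U \<in> borel_measurable P"
    and no_atoms: "\<And>x. prob {\<omega> \<in> space P. U \<omega> = x} = 0"
begin

abbreviation F :: "real \<Rightarrow> real" where
  "F \<equiv> cdf (distr P borel U)"

sublocale distr_U: real_distribution "distr P borel U"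
  by (rule real_distribution_distr) simp

lemma cdf_eq_prob: "F x = prob {\<omega> \<in> space P. U \<omega> \<le> x}"
proof -
  have "F x = measure (distr P borel U) {..x}" by (simp add: cdf_def)
  also have "\<dots> = prob (U -` {..x} \<inter> space P)" by (rule measure_distr) auto
  finally show ?thesis by (simp add: vimage_def Int_def conj_commute)
qed

lemma mono_cdf: "mono F"
  by (simp add: distr_U.cdf_nondecreasing monoI)

lemma isCont_cdf: "isCont F x"
proof -
  have "measure (distr P borel U) {x} = prob (U -` {x} \<inter> space P)"
    by (rule measure_distr) auto
  then show ?thesis
    using distr_U.isCont_cdf no_atoms by (simp add: vimage_def Int_def conj_commute)
qed

lemma measurable_cdf [measurable]: "F \<in> borel_measurable borel"
  by (rule borel_measurable_mono[OF mono_cdf])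

lemma prob_cdf_le:
  assumes "0 \<le> t" "t \<le> 1"
  shows "prob {\<omega> \<in> space P. F (U \<omega>) \<le> t} = t"
proof -
  have interior: "prob {\<omega> \<in> space P. F (U \<omega>) \<le> s} = s" if s: "0 < s" "s < 1" for s
  proof -
    obtain \<beta> where "F \<beta> = s" "\<And>x. F x \<le> s \<longleftrightarrow> x \<le> \<beta>"
      using mono_continuous_sublevel_atMost[OF mono_cdf _ distr_U.cdf_lim_at_bot
          distr_U.cdf_lim_at_top_prob s] isCont_cdf
      by (metis continuous_at_imp_continuous_on)
    then show ?thesis by (simp add: cdf_eq_prob)
  qed
  consider "t = 0" | "0 < t" "t < 1" | "t = 1"
    using assms by linarith
  then show ?thesis
  proof cases
    case 1
    \<comment> \<open>there need not be a quantile at level 0, so approximate from above\<close>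
    have "prob {\<omega> \<in> space P. F (U \<omega>) \<le> 0} \<le> e" if "0 < e" "e < 1" for e :: real
    proof -
      have "prob {\<omega> \<in> space P. F (U \<omega>) \<le> 0} \<le> prob {\<omega> \<in> space P. F (U \<omega>) \<le> e}"
        using that by (intro finite_measure_mono) auto
      then show ?thesis using interior[OF that] by simp
    qed
    then have "prob {\<omega> \<in> space P. F (U \<omega>) \<le> 0} \<le> 0"
      by (intro dense_ge_bounded[of 0 1]) auto
    then show ?thesis using 1 measure_nonneg[of P] by (simp add: antisym)
  next
    case 2
    then show ?thesis by (rule interior)
  next
    case 3
    then have "{\<omega> \<in> space P. F (U \<omega>) \<le> t} = space P"
      using distr_U.cdf_bounded_prob by auto
    then show ?thesis using 3 by (simp add: prob_space)
  qed
qed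

lemma distributed_cdf: "distributed P lborel (\<lambda>\<omega>. F (U \<omega>)) (\<lambda>x. ennreal (indicator {0..1} x))"
proof -
  have "distributed P lborel (\<lambda>\<omega>. F (U \<omega>)) (\<lambda>x. indicator {0..1} x / measure lborel {0..1::real})"
    by (rule uniform_distrI_borel_atLeastAtMost) (auto simp: prob_cdf_le)
  then show ?thesis by simp
qed

lemma AE_cdf_le_iff: "AE \<omega> in P. F (U \<omega>) \<le> F c \<longleftrightarrow> U \<omega> \<le> c"
proof -
  let ?A = "{\<omega> \<in> space P. U \<omega> \<le> c}" and ?B = "{\<omega> \<in> space P. F (U \<omega>) \<le> F c}"
  have "?A \<subseteq> ?B" using mono_cdf by (auto dest: monoD)
  moreover have "prob ?B = prob ?A"
    using prob_cdf_le[of "F c"] distr_U.cdf_nonneg distr_U.cdf_bounded_prob by (simp add: cdf_eq_prob)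
  ultimately have "prob (?B - ?A) = 0"
    by (subst finite_measure_Diff) auto
  then have "?B - ?A \<in> null_sets P"
    by (auto simp: null_sets_def emeasure_eq_measure)
  then have "AE \<omega> in P. \<omega> \<notin> ?B - ?A" by (rule AE_not_in)
  with AE_space show ?thesis by eventually_elim (auto dest: monoD[OF mono_cdf])
qed

lemma prob_selection_region_indep:
  assumes indep: "indep_var borel U borel Z"
  shows "prob {\<omega> \<in> space P. U \<omega> \<in> selection_region d c \<and> Z \<omega> = \<zeta>}
       = (if d = 1 then F c else 1 - F c) * prob {\<omega> \<in> space P. Z \<omega> = \<zeta>}"
proof -
  have "prob {\<omega> \<in> space P. U \<omega> \<in> selection_region d c \<and> Z \<omega> = \<zeta>}
      = prob {\<omega> \<in> space P. U \<omega> \<in> selection_region d c} * prob {\<omega> \<in> space P. Z \<omega> = \<zeta>}"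
    using indep_varD[OF indep, of "selection_region d c" "{\<zeta>}"]
    by (simp add: vimage_def Int_def conj_commute)
  moreover have "{\<omega> \<in> space P. c < U \<omega>} = space P - {\<omega> \<in> space P. U \<omega> \<le> c}" by auto
  ultimately show ?thesis
    using prob_compl[of "{\<omega> \<in> space P. U \<omega> \<le> c}"] by (simp add: selection_region_def cdf_eq_prob)
qed

lemma propensity_eq_cdf:
  assumes indep: "indep_var borel U borel Z" and Z_pos: "prob {\<omega> \<in> space P. Z \<omega> = \<zeta>} > 0"
  shows "cond_prob P (\<lambda>\<omega>. (if U \<omega> \<le> \<nu> (Z \<omega>) then 1 else 0 :: real) = 1) (\<lambda>\<omega>. Z \<omega> = \<zeta>) = F (\<nu> \<zeta>)"
proof -
  have "{\<omega> \<in> space P. (if U \<omega> \<le> \<nu> (Z \<omega>) then 1 else 0 :: real) = 1 \<and> Z \<omega> = \<zeta>}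
      = {\<omega> \<in> space P. U \<omega> \<in> selection_region 1 (\<nu> \<zeta>) \<and> Z \<omega> = \<zeta>}"
    by (auto simp: selection_region_def)
  then show ?thesis
    using prob_selection_region_indep[OF indep, of 1 "\<nu> \<zeta>" \<zeta>] Z_pos by (simp add: cond_prob_def)
qed

text \<open>Mean independence and independence factor out P(Z = \<zeta>); on the remaining factor, U may be
  replaced by the uniform variable F U, whose conditional mean is given by the MTE specification.\<close>

lemma cond_expect_event_selection_region:
  fixes Z Y :: "'a \<Rightarrow> real" and h :: "nat \<Rightarrow> real \<Rightarrow> real"
  assumes indep: "indep_var borel U borel Z"
    and Y: "integrable P Y"
    and mean_indep: "AE \<omega> in P.
      real_cond_exp P (vimage_algebra (space P) (\<lambda>\<omega>. (Z \<omega>, U \<omega>)) borel) Y \<omega>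
        = real_cond_exp P (vimage_algebra (space P) U borel) Y \<omega>"
    and mte: "AE \<omega> in P. real_cond_exp P (vimage_algebra (space P) (\<lambda>\<omega>. F (U \<omega>)) borel) Y \<omega>
                         = \<mu> + (\<Sum>m = 1..M. \<rho> m * h m (F (U \<omega>)))"
    and h_int: "\<And>m. m \<in> {1..M} \<Longrightarrow> set_integrable lborel {0<..<1} (h m)"
    and q: "0 < F c" "F c < 1"
    and Z_pos: "prob {\<omega> \<in> space P. Z \<omega> = \<zeta>} > 0"
  shows "cond_expect_event P Y (\<lambda>\<omega>. U \<omega> \<in> selection_region d c \<and> Z \<omega> = \<zeta>)
       = (\<Sum>j<M + 1. lam h d j (F c) * (if j = 0 then \<mu> else \<rho> j))"
proof -
  define J where "J = {0<..<1} \<inter> selection_region d (F c)"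
  define p\<^sub>Z where "p\<^sub>Z = prob {\<omega> \<in> space P. Z \<omega> = \<zeta>}"
  have [measurable]: "Z \<in> borel_measurable P" "Y \<in> borel_measurable P"
    using indep Y unfolding indep_var_eq by auto
  have AE_region: "AE \<omega> in P. U \<omega> \<in> selection_region d c \<longleftrightarrow> F (U \<omega>) \<in> selection_region d (F c)"
    using AE_cdf_le_iff[of c] by eventually_elim (auto simp: selection_region_def not_le)
  have "(\<integral>\<omega>. Y \<omega> * indicator {\<omega> \<in> space P. U \<omega> \<in> selection_region d c \<and> Z \<omega> = \<zeta>} \<omega> \<partial>P)
      = (\<integral>\<omega>. indicator (selection_region d c) (U \<omega>) * Y \<omega> \<partial>P) * p\<^sub>Z"
    using integral_indicator_mean_independent[OF indep Y mean_indep, of _ "{\<zeta>}"]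
    unfolding p\<^sub>Z_def by simp
  also have "(\<integral>\<omega>. indicator (selection_region d c) (U \<omega>) * Y \<omega> \<partial>P)
      = (\<integral>\<omega>. indicator (selection_region d (F c)) (F (U \<omega>)) * Y \<omega> \<partial>P)"
    using AE_region by (intro integral_cong_AE) (measurable, auto simp: indicator_def)
  also have "\<dots> = (\<integral>x \<in> J. \<mu> + (\<Sum>m = 1..M. \<rho> m * h m x) \<partial>lborel)"
  proof -
    have "set_borel_measurable lborel {0<..<1} (\<lambda>x. \<mu> + (\<Sum>m = 1..M. \<rho> m * h m x))"
      using set_integrable_mte[OF h_int, where \<mu> = \<mu> and \<rho> = \<rho>]
      unfolding set_integrable_def set_borel_measurable_def by (rule borel_measurable_integrable)
    then show ?thesis
      unfolding J_def by (rule set_integral_uniform_cond_exp[OF distributed_cdf Y _ mte]) simp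
  qed
  finally have num: "(\<integral>\<omega>. Y \<omega> * indicator {\<omega> \<in> space P. U \<omega> \<in> selection_region d c \<and> Z \<omega> = \<zeta>} \<omega> \<partial>P)
      = (\<integral>x \<in> J. \<mu> + (\<Sum>m = 1..M. \<rho> m * h m x) \<partial>lborel) * p\<^sub>Z" .
  have den: "prob {\<omega> \<in> space P. U \<omega> \<in> selection_region d c \<and> Z \<omega> = \<zeta>} = measure lborel J * p\<^sub>Z"
    using prob_selection_region_indep[OF indep] measure_selection_region[OF q]
    unfolding J_def p\<^sub>Z_def by simp
  have "p\<^sub>Z > 0" using Z_pos unfolding p\<^sub>Z_def .
  then show ?thesis
    using set_integral_mte_eq_lam_sum[OF q h_int, where d = d and \<mu> = \<mu> and \<rho> = \<rho>]
    unfolding cond_expect_event_def num den J_def by simp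
qed

end

lemma cond_expect_event_cong:
  assumes "\<And>\<omega>. \<omega> \<in> space P \<Longrightarrow> Q \<omega> \<longleftrightarrow> Q' \<omega>"
    and "\<And>\<omega>. \<omega> \<in> space P \<Longrightarrow> Q \<omega> \<Longrightarrow> X \<omega> = X' \<omega>"
  shows "cond_expect_event P X Q = cond_expect_event P X' Q'"
proof -
  have events: "{\<omega> \<in> space P. Q \<omega>} = {\<omega> \<in> space P. Q' \<omega>}" using assms(1) by auto
  have "(\<integral>\<omega>. X \<omega> * indicator {\<omega> \<in> space P. Q \<omega>} \<omega> \<partial>P) = (\<integral>\<omega>. X' \<omega> * indicator {\<omega> \<in> space P. Q \<omega>} \<omega> \<partial>P)"
    by (rule Bochner_Integration.integral_cong) (auto simp: indicator_def assms(2))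
  then show ?thesis unfolding cond_expect_event_def events by simp
qed

lemma mult_mat_vec_submatrix_rows:
  assumes A: "A \<in> carrier_mat k n" and R: "R \<subseteq> {..<k}"
    and v: "v \<in> carrier_vec n" and i: "i < card R"
  shows "(submatrix A R UNIV *\<^sub>v v) $ i = (A *\<^sub>v v) $ pick R i"
proof -
  have rows: "{l. l < k \<and> l \<in> R} = R" using R by auto
  have "pick R i < k" using pick_in_set_le[OF i] R by auto
  then show ?thesis
    using A v i by (simp add: submatrix_def rows scalar_prod_def pick_UNIV)
qed

lemma unisolvent_collocation_minor:
  fixes f :: "nat \<Rightarrow> real \<Rightarrow> real" and x :: "nat \<Rightarrow> real"
  assumes uni: "unisolvent n f S" and xS: "\<And>l. l < k \<Longrightarrow> x l \<in> S"
    and card: "n \<le> card (x ` {..<k})"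
  obtains R where "R \<subseteq> {..<k}" "card R = n"
    "det (submatrix (mat k n (\<lambda>(l, m). f m (x l))) R UNIV) \<noteq> 0"
proof -
  obtain T where "T \<subseteq> x ` {..<k}" "card T = n"
    using obtain_subset_with_card_n[OF card] by blast
  then obtain R where R: "R \<subseteq> {..<k}" "inj_on x R" "card R = n"
    using subset_image_inj card_image by metis
  have pick_R: "pick R j \<in> R" if "j < n" for j
    using pick_in_set_le that R(3) by simp
  define y where "y j = x (pick R j)" for j
  have "inj_on y {..<n}"
  proof (rule inj_onI)
    fix a b assume ab: "a \<in> {..<n}" "b \<in> {..<n}" "y a = y b"
    then have "pick R a = pick R b"
      using R(2) pick_R unfolding y_def by (auto dest: inj_onD)
    then show "a = b"
      using ab R(3) pick_mono_le[of a R b] pick_mono_le[of b R a] by (cases a b rule: linorder_cases) auto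
  qed
  moreover have "\<forall>j<n. y j \<in> S"
    using pick_R R(1) xS unfolding y_def by blast
  ultimately have "det (mat n n (\<lambda>(i, j). f i (y j))) \<noteq> 0"
    using uni unfolding unisolvent_def by blast
  moreover have "submatrix (mat k n (\<lambda>(l, m). f m (x l))) R UNIV
      = transpose_mat (mat n n (\<lambda>(i, j). f i (y j)))"
  proof -
    have "{l. l < k \<and> l \<in> R} = R" using R(1) by auto
    moreover have "pick R i < k" if "i < n" for i using pick_R[OF that] R(1) by auto
    ultimately show ?thesis
      by (intro eq_matI) (auto simp: submatrix_def R(3) y_def pick_UNIV)
  qed
  moreover have "det (transpose_mat (mat n n (\<lambda>(i, j). f i (y j)))) = det (mat n n (\<lambda>(i, j). f i (y j)))"
    by (rule det_transpose[of _ n]) simp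
  ultimately show ?thesis
    using that R(1,3) by metis
qed

lemma unisolvent_collocation_rank:
  fixes f :: "nat \<Rightarrow> real \<Rightarrow> real" and x :: "nat \<Rightarrow> real"
  assumes uni: "unisolvent n f S" and xS: "\<And>l. l < k \<Longrightarrow> x l \<in> S"
    and card: "n \<le> card (x ` {..<k})"
  shows "vec_space.rank k (mat k n (\<lambda>(l, m). f m (x l))) = n"
proof -
  have A: "mat k n (\<lambda>(l, m). f m (x l)) \<in> carrier_mat k n" by simp
  obtain R where "det (submatrix (mat k n (\<lambda>(l, m). f m (x l))) R UNIV) \<noteq> 0"
    using unisolvent_collocation_minor[OF uni xS card] .
  from vec_space.rank_gt_minor[OF A this] vec_space.rank_le_nc[OF A] show ?thesis by simp
qed

lemma unisolvent_collocation_inj: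
  fixes f :: "nat \<Rightarrow> real \<Rightarrow> real" and x :: "nat \<Rightarrow> real"
  assumes uni: "unisolvent n f S" and xS: "\<And>l. l < k \<Longrightarrow> x l \<in> S"
    and card: "n \<le> card (x ` {..<k})"
    and ts: "t \<in> carrier_vec n" "s \<in> carrier_vec n"
    and eq: "mat k n (\<lambda>(l, m). f m (x l)) *\<^sub>v t = mat k n (\<lambda>(l, m). f m (x l)) *\<^sub>v s"
  shows "t = s"
proof -
  define A where "A = mat k n (\<lambda>(l, m). f m (x l))"
  have A: "A \<in> carrier_mat k n" unfolding A_def by simp
  obtain R where R: "R \<subseteq> {..<k}" "card R = n" and "det (submatrix A R UNIV) \<noteq> 0"
    using unisolvent_collocation_minor[OF uni xS card] unfolding A_def .
  define B where "B = submatrix A R UNIV"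
  have det: "det B \<noteq> 0" using \<open>det (submatrix A R UNIV) \<noteq> 0\<close> unfolding B_def .
  have rows: "{l. l < dim_row A \<and> l \<in> R} = R" using A R(1) by auto
  have cols: "{j. j < dim_col A \<and> j \<in> UNIV} = {..<n}" using A by auto
  have "dim_row B = n" "dim_col B = n"
    unfolding B_def dim_submatrix rows cols using R(2) by simp_all
  then have B: "B \<in> carrier_mat n n" by (intro carrier_matI)
  have "B *\<^sub>v t = B *\<^sub>v s"
  proof (rule eq_vecI)
    fix i assume "i < dim_vec (B *\<^sub>v s)"
    then have i: "i < card R" using B R(2) by simp
    have "(B *\<^sub>v t) $ i = (A *\<^sub>v t) $ pick R i"
      unfolding B_def by (rule mult_mat_vec_submatrix_rows[OF A R(1) ts(1) i])
    also have "\<dots> = (A *\<^sub>v s) $ pick R i" using eq by (simp only: A_def)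
    also have "\<dots> = (B *\<^sub>v s) $ i"
      unfolding B_def by (rule mult_mat_vec_submatrix_rows[OF A R(1) ts(2) i, symmetric])
    finally show "(B *\<^sub>v t) $ i = (B *\<^sub>v s) $ i" .
  qed simp
  have "B *\<^sub>v (t - s) = B *\<^sub>v t - B *\<^sub>v s"
    by (rule mult_minus_distrib_mat_vec[OF B ts])
  also have "\<dots> = 0\<^sub>v n"
    unfolding \<open>B *\<^sub>v t = B *\<^sub>v s\<close> by (rule minus_cancel_vec[OF mult_mat_vec_carrier[OF B ts(2)]])
  finally have "B *\<^sub>v (t - s) = 0\<^sub>v n" .
  moreover have "t - s \<in> carrier_vec n" using ts by simp
  ultimately have "t - s = 0\<^sub>v n"
    using det_0_iff_vec_prod_zero[OF B] det by blast
  show "t = s"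
  proof (rule eq_vecI)
    fix j assume "j < dim_vec s"
    then have "(t - s) $ j = 0" using \<open>t - s = 0\<^sub>v n\<close> ts by simp
    then show "t $ j = s $ j" using \<open>j < dim_vec s\<close> ts by simp
  qed (use ts in simp)
qed

theorem theorem1:
  fixes P :: "'a measure"
    and Yp :: "nat \<Rightarrow> 'a \<Rightarrow> real"   \<comment> \<open>Yp 0 = Y_0, Yp 1 = Y_1\<close>
    and U Z :: "'a \<Rightarrow> real"
    and \<nu> :: "real \<Rightarrow> real"
    and K M :: nat
    and z :: "nat \<Rightarrow> real"
    and h :: "nat \<Rightarrow> real \<Rightarrow> real"
    and \<mu> :: "nat \<Rightarrow> real"
    and \<rho> :: "nat \<Rightarrow> nat \<Rightarrow> real"
    and D Y :: "'a \<Rightarrow> real"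
    and F\<^sub>U p :: "real \<Rightarrow> real"
    and A :: "nat \<Rightarrow> real mat"
    and \<beta> \<theta> :: "nat \<Rightarrow> real vec"
  defines "D \<equiv> (\<lambda>\<omega>. if U \<omega> \<le> \<nu> (Z \<omega>) then 1 else 0)"
    and "Y \<equiv> (\<lambda>\<omega>. (1 - D \<omega>) * Yp 0 \<omega> + D \<omega> * Yp 1 \<omega>)"
    and "F\<^sub>U \<equiv> cdf (distr P borel U)"
    and "p \<equiv> (\<lambda>x. cond_prob P (\<lambda>\<omega>. D \<omega> = 1) (\<lambda>\<omega>. Z \<omega> = x))"
    and "A \<equiv> (\<lambda>d. mat (K + 1) (M + 1) (\<lambda>(l, m). lam h d m (p (z l))))"
    and "\<beta> \<equiv> (\<lambda>d. vec (K + 1)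
                 (\<lambda>l. cond_expect_event P Y (\<lambda>\<omega>. D \<omega> = real d \<and> Z \<omega> = z l)))"
    and "\<theta> \<equiv> (\<lambda>d. vec (M + 1) (\<lambda>m. if m = 0 then \<mu> d else \<rho> d m))"
  assumes prob: "prob_space P"
    and meas_Y: "\<And>d. d \<in> {0, 1} \<Longrightarrow> Yp d \<in> borel_measurable P"
    and meas_U: "U \<in> borel_measurable P"
    and meas_Z: "Z \<in> borel_measurable P"
    and meas_\<nu>: "\<nu> \<in> borel_measurable borel"
    \<comment> \<open>Z is discrete with support {z_0,...,z_K}\<close>
    and z_inj: "inj_on z {0..K}"
    and Z_supp: "measure P {\<omega> \<in> space P. Z \<omega> \<in> z ` {0..K}} = 1"
    and Z_pos: "\<And>l. l \<le> K \<Longrightarrow> measure P {\<omega> \<in> space P. Z \<omega> = z l} > 0"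
    \<comment> \<open>(1)\<close>
    and indep: "prob_space.indep_var P borel U borel Z"
    \<comment> \<open>(2)\<close>
    and mean_indep: "\<And>d. d \<in> {0, 1} \<Longrightarrow>
          AE \<omega> in P. real_cond_exp P (vimage_algebra (space P) (\<lambda>\<omega>. (Z \<omega>, U \<omega>)) borel) (Yp d) \<omega>
                    = real_cond_exp P (vimage_algebra (space P) U borel) (Yp d) \<omega>"
    and integ: "\<And>d. d \<in> {0, 1} \<Longrightarrow> integrable P (Yp d)"
    \<comment> \<open>(3)\<close>
    and U_cont: "\<And>x. measure P {\<omega> \<in> space P. U \<omega> = x} = 0"
    \<comment> \<open>(4)\<close>
    and p_bounds: "\<And>l. l \<le> K \<Longrightarrow> 0 < p (z l) \<and> p (z l) < 1"
    \<comment> \<open>(5)\<close>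
    and h_cont: "\<And>m. m \<in> {1..M} \<Longrightarrow> continuous_on {0<..<1} (h m)"
    and h_int: "\<And>m. m \<in> {1..M} \<Longrightarrow> set_integrable lborel {0<..<1} (h m)"
    and MTE: "\<And>d. d \<in> {0, 1} \<Longrightarrow>
          AE \<omega> in P. real_cond_exp P (vimage_algebra (space P) (\<lambda>\<omega>. F\<^sub>U (U \<omega>)) borel) (Yp d) \<omega>
                    = \<mu> d + (\<Sum>m = 1..M. \<rho> d m * h m (F\<^sub>U (U \<omega>)))"
    \<comment> \<open>(6)\<close>
    and unisolv: "\<And>d. d \<in> {0, 1} \<Longrightarrow> unisolvent (M + 1) (lam h d) {0<..<1}"
    \<comment> \<open>(7)\<close>
    and rank_cond: "card (p ` z ` {0..K}) \<ge> M + 1"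
  shows "\<forall>d \<in> {0, 1}.
           \<beta> d = A d *\<^sub>v \<theta> d
         \<and> vec_space.rank (K + 1) (A d) = M + 1
         \<and> (\<forall>t \<in> carrier_vec (M + 1). A d *\<^sub>v t = \<beta> d \<longrightarrow> t = \<theta> d)"
proof -
  interpret U: continuous_real_rv P U
    using prob meas_U U_cont by (simp add: continuous_real_rv_def continuous_real_rv_axioms_def)
  have p_eq: "p (z l) = F\<^sub>U (\<nu> (z l))" if "l \<le> K" for l
    using U.propensity_eq_cdf[OF indep Z_pos[OF that]] by (simp add: p_def D_def F\<^sub>U_def)
  have row: "\<beta> d $ l = (A d *\<^sub>v \<theta> d) $ l" if d: "d \<in> {0, 1}" and l: "l \<le> K" for d l
  proof -
    have q: "0 < F\<^sub>U (\<nu> (z l))" "F\<^sub>U (\<nu> (z l)) < 1"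
      using p_bounds[OF l] p_eq[OF l] by auto
    have "\<beta> d $ l = cond_expect_event P Y (\<lambda>\<omega>. D \<omega> = real d \<and> Z \<omega> = z l)"
      using l by (simp add: \<beta>_def)
    also have "\<dots> = cond_expect_event P (Yp d) (\<lambda>\<omega>. U \<omega> \<in> selection_region d (\<nu> (z l)) \<and> Z \<omega> = z l)"
      using d by (intro cond_expect_event_cong) (auto simp: Y_def D_def selection_region_def)
    also have "\<dots> = (\<Sum>j<M + 1. lam h d j (F\<^sub>U (\<nu> (z l))) * (if j = 0 then \<mu> d else \<rho> d j))"
      using U.cond_expect_event_selection_region[OF indep integ[OF d] mean_indep[OF d]
          MTE[OF d, unfolded F\<^sub>U_def] h_int q[unfolded F\<^sub>U_def] Z_pos[OF l]]
      unfolding F\<^sub>U_def .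
    also have "\<dots> = (A d *\<^sub>v \<theta> d) $ l"
      using l p_eq[OF l] by (simp add: A_def \<theta>_def scalar_prod_def atLeast0LessThan)
    finally show ?thesis .
  qed
  show ?thesis
  proof (rule ballI, intro conjI)
    fix d :: nat assume d: "d \<in> {0, 1}"
    have card: "M + 1 \<le> card ((\<lambda>l. p (z l)) ` {..<K + 1})"
      using rank_cond by (simp add: image_image atLeast0AtMost lessThan_Suc_atMost)
    have nodes: "\<And>l. l < K + 1 \<Longrightarrow> p (z l) \<in> {0<..<1}" using p_bounds by auto
    show eq: "\<beta> d = A d *\<^sub>v \<theta> d"
    proof (rule eq_vecI)
      fix l assume "l < dim_vec (A d *\<^sub>v \<theta> d)"
      then show "\<beta> d $ l = (A d *\<^sub>v \<theta> d) $ l" by (intro row[OF d]) (simp add: A_def)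
    qed (simp add: \<beta>_def A_def)
    show "vec_space.rank (K + 1) (A d) = M + 1"
      unfolding A_def by (rule unisolvent_collocation_rank[OF unisolv[OF d] nodes card])
    show "\<forall>t \<in> carrier_vec (M + 1). A d *\<^sub>v t = \<beta> d \<longrightarrow> t = \<theta> d"
      using unisolvent_collocation_inj[OF unisolv[OF d] nodes card] eq unfolding A_def
      by (auto simp: \<theta>_def)
  qed
qed

end
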